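(* Let $I$ be a general ring. The following are equivalent: (1) $I$ is a quasipolar general ring; (2) for every $a\in I$, the element $(0,a)$ is quasipolar in the ring $E(\mathbb{Z};I)$; (3) there exists a ring $S$ with identity such that $I$ is a unital $(S,S)$-bimodule compatible with the multiplication of $I$ (as below) and $(0,a)$ is quasipolar in $E(S;I)$ for every $a\in I$.
   Context: A general ring is an associative ring not necessarily having an identity. For $p,q\in I$, $p*q=p+q-pq$; $Q(I)=\{q\in I\mid p*q=0=q*p\text{ for some }p\in I\}$; $\mathrm{comm}(a)=\{x\mid xa=ax\}$, $\mathrm{comm}^2(a)=\{x\mid xy=yx\text{ for all }y\in\mathrm{comm}(a)\}$; $QN(I)=\{q\in I\mid qx\in Q(I)\text{ for all }x\in\mathrm{comm}(q)\}$. An element $a\in I$ is quasipolar in $I$ if there is an idempotent $p\in\mathrm{comm}^2(a)$ with $a+p\in Q(I)$ and $a-ap\in QN(I)$; $I$ is quasipolar if all its elements are. For a ring $R$ with identity, $U(R)$ is its unit group, $R^{qnil}=\{a\in R\mid 1+ax\in U(R)\text{ for all }x\in\mathrm{comm}(a)\}$, and $a\in R$ is quasipolar if there is an idempotent $p\in\mathrm{comm}^2(a)$ with $a+p\in U(R)$ and $ap\in R^{qnil}$. If $S$ is a ring with identity and $I$ is a unital $(S,S)$-bimodule such that $(vw)s=v(ws)$, $(vs)w=v(sw)$, $(sv)w=s(vw)$ for all $v,w\in I$, $s\in S$, the ideal-extension (Dorroh extension) $E(S;I)$ is the additive group $S\oplus I$ with multiplication $(s,v)(r,w)=(sr, sw+vr+vw)$;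 it is a ring with identity $(1,0)$. $E(\mathbb{Z};I)$ is the standard unitization of $I$. *)

theory Defs
  imports "HOL-Algebra.Ring"
begin

definition circ :: "'a::ring \<Rightarrow> 'a \<Rightarrow> 'a" where
  "circ p q = p + q - p * q"

definition Qset :: "'a::ring set" where
  "Qset = {q. \<exists>p. circ p q = 0 \<and> circ q p = 0}"

definition gcomm :: "'a::ring \<Rightarrow> 'a set" where
  "gcomm a = {x. x * a = a * x}"

definition gcomm2 :: "'a::ring \<Rightarrow> 'a set" where
  "gcomm2 a = {x. \<forall>y \<in> gcomm a. x * y = y * x}"

definition QNset :: "'a::ring set" where
  "QNset = {q. \<forall>x \<in> gcomm q. q * x \<in> Qset}"

definition gquasipolar_elem :: "'a::ring \<Rightarrow> bool" where
  "gquasipolar_elem a \<longleftrightarrow>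
     (\<exists>p \<in> gcomm2 a. p * p = p \<and> a + p \<in> Qset \<and> a - a * p \<in> QNset)"

definition gquasipolar_ring :: "'a::ring itself \<Rightarrow> bool" where
  "gquasipolar_ring _ \<longleftrightarrow> (\<forall>a::'a. gquasipolar_elem a)"

definition rcomm :: "('b, 'm) ring_scheme \<Rightarrow> 'b \<Rightarrow> 'b set" where
  "rcomm R a = {x \<in> carrier R. x \<otimes>\<^bsub>R\<^esub> a = a \<otimes>\<^bsub>R\<^esub> x}"

definition rcomm2 :: "('b, 'm) ring_scheme \<Rightarrow> 'b \<Rightarrow> 'b set" where
  "rcomm2 R a = {x \<in> carrier R. \<forall>y \<in> rcomm R a. x \<otimes>\<^bsub>R\<^esub> y = y \<otimes>\<^bsub>R\<^esub> x}"

definition rqnil :: "('b, 'm) ring_scheme \<Rightarrow> 'b set" where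
  "rqnil R = {a \<in> carrier R. \<forall>x \<in> rcomm R a. \<one>\<^bsub>R\<^esub> \<oplus>\<^bsub>R\<^esub> a \<otimes>\<^bsub>R\<^esub> x \<in> Units R}"

definition rquasipolar :: "('b, 'm) ring_scheme \<Rightarrow> 'b \<Rightarrow> bool" where
  "rquasipolar R a \<longleftrightarrow>
     (\<exists>p \<in> rcomm2 R a. p \<otimes>\<^bsub>R\<^esub> p = p \<and> a \<oplus>\<^bsub>R\<^esub> p \<in> Units R
        \<and> a \<otimes>\<^bsub>R\<^esub> p \<in> rqnil R)"

definition compat_bimodule ::
  "('s::ring_1 \<Rightarrow> 'a::ring \<Rightarrow> 'a) \<Rightarrow> ('a \<Rightarrow> 's \<Rightarrow> 'a) \<Rightarrow> bool" where
  "compat_bimodule l r \<longleftrightarrow>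
     (\<forall>s v w. l s (v + w) = l s v + l s w) \<and>
     (\<forall>s t v. l (s + t) v = l s v + l t v) \<and>
     (\<forall>s t v. l (s * t) v = l s (l t v)) \<and>
     (\<forall>v. l 1 v = v) \<and>
     (\<forall>s v w. r (v + w) s = r v s + r w s) \<and>
     (\<forall>s t v. r v (s + t) = r v s + r v t) \<and>
     (\<forall>s t v. r v (s * t) = r (r v s) t) \<and>
     (\<forall>v. r v 1 = v) \<and>
     (\<forall>s t v. r (l s v) t = l s (r v t)) \<and>
     (\<forall>s v w. r (v * w) s = v * r w s) \<and>
     (\<forall>s v w. r v s * w = v * l s w) \<and>
     (\<forall>s v w. l s v * w = l s (v * w))"

definition dorroh ::
  "('s::ring_1 \<Rightarrow> 'a::ring \<Rightarrow> 'a) \<Rightarrow> ('a \<Rightarrow> 's \<Rightarrow> 'a) \<Rightarrow> ('s \<times> 'a) ring" where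
  "dorroh l r = \<lparr> carrier = UNIV,
      mult = (\<lambda>(s, v) (t, w). (s * t, l s w + r v t + v * w)),
      one = (1, 0),
      zero = (0, 0),
      add = (\<lambda>(s, v) (t, w). (s + t, v + w)) \<rparr>"

definition zact :: "int \<Rightarrow> 'a::ab_group_add \<Rightarrow> 'a" where
  "zact k v = (if 0 \<le> k then (\<Sum>i<nat k. v) else - (\<Sum>i<nat (- k). v))"

abbreviation EZ :: "(int \<times> 'a::ring) ring" where
  "EZ \<equiv> dorroh zact (\<lambda>v k. zact k v)"

end

theory Submission
  imports Defs
begin

text \<open>
  Inside \<open>E(S;I)\<close>, the element \<open>(1, v)\<close> is \<open>1 + v\<close>, and \<open>circ p q = 0\<close> says
  \<open>(1 - p)(1 - q) = 1\<close>; so \<open>(1, v)\<close> is a unit exactly when \<open>-v \<in> Q(I)\<close>. A spectral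
  idempotent of \<open>(0, a)\<close> must have first component \<open>1\<close>, i.e. it is \<open>1 - e\<close> with
  \<open>e \<in> I\<close> idempotent, and one checks that \<open>1 - e\<close> is a spectral idempotent of \<open>(0, a)\<close>
  in \<open>E(S;I)\<close> iff \<open>e\<close> is one of \<open>-a\<close> in \<open>I\<close>. Thus \<open>(0, a)\<close> is quasipolar in \<open>E(S;I)\<close>
  iff \<open>-a\<close> is quasipolar in \<open>I\<close>, for every compatible \<open>S\<close>, in particular for \<open>S = \<int>\<close>.
\<close>

lemma zact_0 [simp]: "zact 0 v = 0"
  by (simp add: zact_def)

lemma zact_one [simp]: "zact 1 v = v"
  by (simp add: zact_def)

lemma zact_add_one: "zact (k + 1) v = zact k v + v"
proof (cases "0 \<le> k")
  case True
  then have "nat (k + 1) = Suc (nat k)" by simp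
  with True show ?thesis by (simp add: zact_def)
next
  case False
  then have "nat (- k) = Suc (nat (- (k + 1)))" by simp
  with False show ?thesis by (auto simp: zact_def)
qed

lemma zact_diff_one: "zact (k - 1) v = zact k v - v"
  using zact_add_one[of "k - 1" v] by simp

lemma zact_add: "zact (s + t) v = zact s v + zact t v"
proof (induction t rule: int_induct[where k = 0])
  case (step1 i)
  have "zact (s + (i + 1)) v = zact (s + i) v + v"
    by (metis add.assoc zact_add_one)
  with step1 show ?case by (simp add: zact_add_one)
next
  case (step2 i)
  have "zact (s + (i - 1)) v = zact (s + i) v - v"
    by (metis add_diff_eq zact_diff_one)
  with step2 show ?case by (simp add: zact_diff_one)
qed simp

lemma zact_diff: "zact (s - t) v = zact s v - zact t v"
  using zact_add[of "s - t" t v] by simp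

lemma zact_add_right: "zact s (v + w) = zact s v + zact s w"
proof (induction s rule: int_induct[where k = 0])
  case (step1 i)
  then show ?case by (simp add: zact_add_one)
next
  case (step2 i)
  then show ?case by (simp add: zact_diff_one)
qed simp

lemma zact_mult: "zact (s * t) v = zact s (zact t v)"
proof (induction s rule: int_induct[where k = 0])
  case (step1 i)
  then show ?case by (simp add: distrib_right zact_add zact_add_one)
next
  case (step2 i)
  then show ?case by (simp add: left_diff_distrib zact_diff zact_diff_one)
qed simp

lemma zact_mult_left: "zact s v * w = zact s (v * (w :: 'a :: ring))"
proof (induction s rule: int_induct[where k = 0])
  case (step1 i)
  then show ?case by (simp add: zact_add_one distrib_right)
next
  case (step2 i)
  then show ?case by (simp add: zact_diff_one left_diff_distrib)
qed simp

lemma zact_mult_right: "v * zact s w = zact s (v * (w :: 'a :: ring))"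
proof (induction s rule: int_induct[where k = 0])
  case (step1 i)
  then show ?case by (simp add: zact_add_one distrib_left)
next
  case (step2 i)
  then show ?case by (simp add: zact_diff_one right_diff_distrib)
qed simp

lemma compat_bimodule_zact: "compat_bimodule (zact :: int \<Rightarrow> 'a::ring \<Rightarrow> 'a) (\<lambda>v k. zact k v)"
  unfolding compat_bimodule_def
  by (simp add: zact_add zact_add_right zact_mult_left zact_mult_right flip: zact_mult)
     (simp add: zact_def mult.commute)

lemma circ_assoc: "circ (circ p q) r = circ p (circ q r)"
  by (simp add: circ_def algebra_simps)

lemma circ_zero_right [simp]: "circ p 0 = p"
  by (simp add: circ_def)

text \<open>The analogue of \<open>(1 - c)(1 + c) = 1 - c\<^sup>2\<close>: from a quasi-inverse of \<open>c\<^sup>2\<close> one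
  builds a left and a right quasi-inverse of \<open>-c\<close>, which agree by associativity of \<open>circ\<close>.\<close>

lemma uminus_in_Qset_of_square:
  fixes c :: "'a::ring"
  assumes "c * c \<in> Qset"
  shows "- c \<in> Qset"
proof -
  obtain p where p: "circ p (c * c) = 0" "circ (c * c) p = 0"
    using assms by (auto simp: Qset_def)
  define q where "q = p + c - p * c"
  define q' where "q' = c + p - c * p"
  have left: "circ q (- c) = 0"
    using p(1) by (simp add: q_def circ_def algebra_simps)
  have right: "circ (- c) q' = 0"
    using p(2) by (simp add: q'_def circ_def algebra_simps)
  have "q = circ q (circ (- c) q')"
    using right by simp
  also have "\<dots> = circ (circ q (- c)) q'"
    by (rule circ_assoc[symmetric])
  also have "\<dots> = q'"
    using left by (simp add: circ_def)
  finally have "q = q'" .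
  with left right show ?thesis
    by (auto simp: Qset_def)
qed

lemma gcomm_uminus [simp]: "gcomm (- a) = gcomm a"
  by (auto simp: gcomm_def)

lemma gcomm2_uminus [simp]: "gcomm2 (- a) = gcomm2 a"
  by (simp add: gcomm2_def)

lemma uminus_in_gcomm_iff [simp]: "- x \<in> gcomm a \<longleftrightarrow> x \<in> gcomm a"
  by (auto simp: gcomm_def)

lemma self_in_gcomm: "a \<in> gcomm a"
  by (simp add: gcomm_def)

lemma gcomm2_commutes: "e \<in> gcomm2 a \<Longrightarrow> e * a = a * e"
  using self_in_gcomm by (auto simp: gcomm2_def)

lemma uminus_in_QNset_iff [simp]: "- b \<in> QNset \<longleftrightarrow> b \<in> QNset"
proof -
  have "- b \<in> QNset" if "b \<in> QNset" for b :: 'a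
    using that by (auto simp: QNset_def) (metis minus_mult_right uminus_in_gcomm_iff)
  then show ?thesis by force
qed

lemma gquasipolar_elem_uminus_iff:
  "gquasipolar_elem (- a) \<longleftrightarrow> (\<exists>e \<in> gcomm2 a. e * e = e \<and> e - a \<in> Qset \<and> a - a * e \<in> QNset)"
proof -
  have "- a - - a * e = - (a - a * e)" and "- a + e = e - a" for e
    by simp_all
  then show ?thesis
    unfolding gquasipolar_elem_def gcomm2_uminus by (simp only: uminus_in_QNset_iff)
qed

lemma rcomm_mult_closed:
  assumes "monoid R" "A \<in> carrier R" "X \<in> rcomm R A" "Y \<in> rcomm R A"
  shows "X \<otimes>\<^bsub>R\<^esub> Y \<in> rcomm R A"
  using assms by (auto simp: rcomm_def monoid.m_closed) (metis monoid.m_assoc)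

locale dorroh_extension =
  fixes l :: "'s::ring_1 \<Rightarrow> 'a::ring \<Rightarrow> 'a" and r :: "'a \<Rightarrow> 's \<Rightarrow> 'a"
  assumes compat: "compat_bimodule l r"
begin

lemma l_add: "l s (v + w) = l s v + l s w"
  and l_add_scalar: "l (s + t) v = l s v + l t v"
  and l_mult_scalar: "l (s * t) v = l s (l t v)"
  and l_one [simp]: "l 1 v = v"
  and r_add: "r (v + w) s = r v s + r w s"
  and r_add_scalar: "r v (s + t) = r v s + r v t"
  and r_mult_scalar: "r v (s * t) = r (r v s) t"
  and r_one [simp]: "r v 1 = v"
  and r_l_commute: "r (l s v) t = l s (r v t)"
  and r_mult: "r (v * w) s = v * r w s"
  and r_mult_l: "r v s * w = v * l s w"
  and l_mult: "l s v * w = l s (v * w)"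
  using compat by (simp_all add: compat_bimodule_def)

lemma l_zero_scalar [simp]: "l 0 v = 0"
  using l_add_scalar[of 0 0 v] by simp

lemma r_zero_scalar [simp]: "r v 0 = 0"
  using r_add_scalar[of v 0 0] by simp

lemma l_zero [simp]: "l s 0 = 0"
  using l_add[of s 0 0] by simp

lemma r_zero [simp]: "r 0 s = 0"
  using r_add[of 0 0 s] by simp

lemma l_uminus [simp]: "l s (- v) = - l s v"
  using l_add[of s "- v" v] by (simp add: eq_neg_iff_add_eq_0)

lemma r_uminus [simp]: "r (- v) s = - r v s"
  using r_add[of "- v" v s] by (simp add: eq_neg_iff_add_eq_0)

abbreviation D :: "('s \<times> 'a) ring" where
  "D \<equiv> dorroh l r"

lemma dorroh_mult [simp]: "(s, v) \<otimes>\<^bsub>D\<^esub> (t, w) = (s * t, l s w + r v t + v * w)"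
  and dorroh_add [simp]: "(s, v) \<oplus>\<^bsub>D\<^esub> (t, w) = (s + t, v + w)"
  and dorroh_one [simp]: "\<one>\<^bsub>D\<^esub> = (1, 0)"
  and dorroh_zero [simp]: "\<zero>\<^bsub>D\<^esub> = (0, 0)"
  and dorroh_carrier [simp]: "carrier D = UNIV"
  by (simp_all add: dorroh_def)

lemma ring_dorroh: "ring D"
proof (rule ringI)
  show "abelian_group D"
    by (rule abelian_groupI) (auto simp: algebra_simps, (metis right_minus)+)
  show "monoid D"
    by (rule monoidI)
       (auto simp: l_add l_add_scalar l_mult_scalar r_add r_add_scalar r_mult_scalar
          r_l_commute r_mult r_mult_l l_mult algebra_simps)
qed (auto simp: l_add l_add_scalar r_add r_add_scalar algebra_simps)

lemma dorroh_assoc: "(X \<otimes>\<^bsub>D\<^esub> Y) \<otimes>\<^bsub>D\<^esub> Z = X \<otimes>\<^bsub>D\<^esub> (Y \<otimes>\<^bsub>D\<^esub> Z)"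
  using ring.is_monoid[OF ring_dorroh] by (simp add: monoid.m_assoc)

lemma dorroh_rcomm_mult_closed:
  "X \<in> rcomm D A \<Longrightarrow> Y \<in> rcomm D A \<Longrightarrow> X \<otimes>\<^bsub>D\<^esub> Y \<in> rcomm D A"
  using rcomm_mult_closed[OF ring.is_monoid[OF ring_dorroh]] by simp

lemma dorroh_rcomm_zero_iff: "((0::'s), y) \<in> rcomm D (0, a) \<longleftrightarrow> y \<in> gcomm a"
  by (simp add: rcomm_def gcomm_def)

lemma Units_dorroh_one_iff: "((1::'s), v) \<in> Units D \<longleftrightarrow> - v \<in> Qset"
proof
  assume "(1, v) \<in> Units D"
  then obtain t w where left: "(t, w) \<otimes>\<^bsub>D\<^esub> (1, v) = (1, 0)"
    and right: "(1, v) \<otimes>\<^bsub>D\<^esub> (t, w) = (1, 0)"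
    unfolding Units_def by auto
  from right have "t = 1"
    by simp
  with left right have "v + w + w * v = 0" and "w + v + v * w = 0"
    by simp_all
  moreover have "circ (- w) (- v) = - (v + w + w * v)" and "circ (- v) (- w) = - (w + v + v * w)"
    by (simp_all add: circ_def algebra_simps)
  ultimately have "circ (- w) (- v) = 0" and "circ (- v) (- w) = 0"
    by simp_all
  then show "- v \<in> Qset"
    unfolding Qset_def by blast
next
  assume "- v \<in> Qset"
  then obtain p where "circ p (- v) = 0" and "circ (- v) p = 0"
    unfolding Qset_def by blast
  then have "(1, - p) \<otimes>\<^bsub>D\<^esub> (1, v) = (1, 0)" and "(1, v) \<otimes>\<^bsub>D\<^esub> (1, - p) = (1, 0)"
    by (simp_all add: circ_def algebra_simps)
  then show "(1, v) \<in> Units D"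
    unfolding Units_def dorroh_carrier dorroh_one by blast
qed

lemma dorroh_idempotent_iff: "((1::'s), - e) \<otimes>\<^bsub>D\<^esub> (1, - e) = (1, - e) \<longleftrightarrow> e * e = e"
  by (auto simp: algebra_simps)

lemma fst_eq_one_of_idempotent_unit_shift:
  assumes "P \<otimes>\<^bsub>D\<^esub> P = P" and "(0, a) \<oplus>\<^bsub>D\<^esub> P \<in> Units D"
  shows "fst P = 1"
proof -
  obtain \<sigma> x where P: "P = (\<sigma>, x)"
    by force
  from assms(2) obtain t w where "(\<sigma>, a + x) \<otimes>\<^bsub>D\<^esub> (t, w) = (1, 0)"
    unfolding Units_def P by auto
  then have inv: "\<sigma> * t = 1"
    by simp
  have "\<sigma> = \<sigma> * (\<sigma> * t)"
    by (simp add: inv)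
  also have "\<dots> = \<sigma> * t"
    using assms(1) by (simp add: P flip: mult.assoc)
  finally show ?thesis
    by (simp add: P inv)
qed

lemma gcomm2_of_dorroh_rcomm2:
  assumes "((1::'s), - e) \<in> rcomm2 D (0, a)"
  shows "e \<in> gcomm2 a"
  unfolding gcomm2_def
proof (intro CollectI ballI)
  fix y assume "y \<in> gcomm a"
  then have "((0::'s), y) \<in> rcomm D (0, a)"
    by (simp add: dorroh_rcomm_zero_iff)
  then have "(1, - e) \<otimes>\<^bsub>D\<^esub> (0, y) = (0, y) \<otimes>\<^bsub>D\<^esub> (1, - e)"
    using assms unfolding rcomm2_def by blast
  then show "e * y = y * e"
    by simp
qed

lemma dorroh_rcomm2_of_gcomm2:
  assumes idem: "e * e = e" and e: "e \<in> gcomm2 a"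
  shows "((1::'s), - e) \<in> rcomm2 D (0, a)"
  unfolding rcomm2_def
proof (intro CollectI conjI ballI)
  show "(1, - e) \<in> carrier D"
    by simp
  fix Y assume Y: "Y \<in> rcomm D ((0::'s), a)"
  obtain t w where Yt: "Y = (t, w)"
    by force
  txt \<open>\<open>u\<close> and \<open>v\<close> commute with \<open>a\<close>, hence with \<open>e\<close>, and then \<open>u = ue = eu = ve = ev = v\<close>.\<close>
  define u where "u = l t e + w * e"
  define v where "v = r e t + e * w"
  have Yu: "Y \<otimes>\<^bsub>D\<^esub> (0, e) = (0, u)" and vY: "(0, e) \<otimes>\<^bsub>D\<^esub> Y = (0, v)"
    by (simp_all add: Yt u_def v_def)
  have E: "((0::'s), e) \<in> rcomm D (0, a)"
    using gcomm2_commutes[OF e] by (simp add: dorroh_rcomm_zero_iff gcomm_def)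
  have "u \<in> gcomm a" and "v \<in> gcomm a"
    using dorroh_rcomm_mult_closed[OF Y E] dorroh_rcomm_mult_closed[OF E Y]
    by (simp_all add: Yu vY dorroh_rcomm_zero_iff)
  then have eu: "e * u = u * e" and ev: "e * v = v * e"
    using e by (auto simp: gcomm2_def)
  have ee: "(0, e) \<otimes>\<^bsub>D\<^esub> (0, e) = ((0::'s), e)"
    by (simp add: idem)
  have "(0, u) \<otimes>\<^bsub>D\<^esub> (0, e) = ((0::'s), u)"
    by (metis Yu dorroh_assoc ee)
  then have ue: "u * e = u"
    by simp
  have "(0, e) \<otimes>\<^bsub>D\<^esub> (0, v) = ((0::'s), v)"
    by (metis vY dorroh_assoc ee)
  then have ve: "e * v = v"
    by simp
  have "(0, e) \<otimes>\<^bsub>D\<^esub> (0, u) = ((0::'s), v) \<otimes>\<^bsub>D\<^esub> (0, e)"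
    by (metis Yu vY dorroh_assoc)
  then have "e * u = v * e"
    by simp
  with eu ue ev ve have "u = v"
    by simp
  then show "(1, - e) \<otimes>\<^bsub>D\<^esub> Y = Y \<otimes>\<^bsub>D\<^esub> (1, - e)"
    by (simp add: Yt u_def v_def algebra_simps)
qed

lemma dorroh_rqnil_zero_iff: "((0::'s), b) \<in> rqnil D \<longleftrightarrow> b \<in> QNset"
proof
  assume b: "(0, b) \<in> rqnil D"
  show "b \<in> QNset"
    unfolding QNset_def
  proof (intro CollectI ballI)
    fix y assume "y \<in> gcomm b"
    then have "((0::'s), - y) \<in> rcomm D (0, b)"
      by (simp add: dorroh_rcomm_zero_iff)
    with b have "\<one>\<^bsub>D\<^esub> \<oplus>\<^bsub>D\<^esub> (0, b) \<otimes>\<^bsub>D\<^esub> (0, - y) \<in> Units D"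
      unfolding rqnil_def by blast
    then show "b * y \<in> Qset"
      by (simp add: Units_dorroh_one_iff)
  qed
next
  assume b: "b \<in> QNset"
  show "(0, b) \<in> rqnil D"
    unfolding rqnil_def
  proof (intro CollectI conjI ballI)
    show "(0, b) \<in> carrier D"
      by simp
    fix X assume X: "X \<in> rcomm D ((0::'s), b)"
    txt \<open>With \<open>(0, c) = (0, b) X\<close> we get \<open>c\<^sup>2 = b y\<close> for some \<open>y\<close> commuting with \<open>b\<close>.\<close>
    obtain c where bX: "(0, b) \<otimes>\<^bsub>D\<^esub> X = ((0::'s), c)"
      by (cases X) simp
    obtain y where Xc: "X \<otimes>\<^bsub>D\<^esub> (0, c) = ((0::'s), y)"
      by (cases X) simp
    have B: "((0::'s), b) \<in> rcomm D (0, b)"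
      by (simp add: rcomm_def)
    have "X \<otimes>\<^bsub>D\<^esub> (0, c) \<in> rcomm D (0, b)"
      by (metis B X bX dorroh_rcomm_mult_closed)
    then have "b * y \<in> Qset"
      using b by (simp add: Xc dorroh_rcomm_zero_iff QNset_def)
    moreover have "(0, c) \<otimes>\<^bsub>D\<^esub> (0, c) = ((0::'s), b) \<otimes>\<^bsub>D\<^esub> (0, y)"
      by (metis bX Xc dorroh_assoc)
    ultimately have "- c \<in> Qset"
      by (simp add: uminus_in_Qset_of_square)
    then show "\<one>\<^bsub>D\<^esub> \<oplus>\<^bsub>D\<^esub> (0, b) \<otimes>\<^bsub>D\<^esub> X \<in> Units D"
      by (simp add: bX Units_dorroh_one_iff)
  qed
qed

lemma rquasipolar_dorroh_zero_iff: "rquasipolar D ((0::'s), a) \<longleftrightarrow> gquasipolar_elem (- a)"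
  unfolding gquasipolar_elem_uminus_iff
proof
  assume "rquasipolar D (0, a)"
  then obtain P where comm: "P \<in> rcomm2 D (0, a)" and idem: "P \<otimes>\<^bsub>D\<^esub> P = P"
    and unit: "(0, a) \<oplus>\<^bsub>D\<^esub> P \<in> Units D" and nil: "(0, a) \<otimes>\<^bsub>D\<^esub> P \<in> rqnil D"
    unfolding rquasipolar_def by blast
  define e where "e = - snd P"
  have P: "P = (1, - e)"
    using fst_eq_one_of_idempotent_unit_shift[OF idem unit] by (simp add: e_def prod_eq_iff)
  show "\<exists>e \<in> gcomm2 a. e * e = e \<and> e - a \<in> Qset \<and> a - a * e \<in> QNset"
  proof (intro bexI conjI)
    show "e \<in> gcomm2 a"
      using comm by (simp add: P gcomm2_of_dorroh_rcomm2)
    show "e * e = e"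
      using idem unfolding P dorroh_idempotent_iff .
    show "e - a \<in> Qset"
      using unit by (simp add: P Units_dorroh_one_iff)
    show "a - a * e \<in> QNset"
      using nil by (simp add: P dorroh_rqnil_zero_iff)
  qed
next
  assume "\<exists>e \<in> gcomm2 a. e * e = e \<and> e - a \<in> Qset \<and> a - a * e \<in> QNset"
  then obtain e where e: "e \<in> gcomm2 a" and idem: "e * e = e"
    and unit: "e - a \<in> Qset" and nil: "a - a * e \<in> QNset"
    by blast
  show "rquasipolar D (0, a)"
    unfolding rquasipolar_def
  proof (intro bexI conjI)
    show "(1, - e) \<in> rcomm2 D (0, a)"
      by (rule dorroh_rcomm2_of_gcomm2[OF idem e])
    show "(1, - e) \<otimes>\<^bsub>D\<^esub> (1, - e) = (1, - e)"
      unfolding dorroh_idempotent_iff by (rule idem)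
    show "(0, a) \<oplus>\<^bsub>D\<^esub> (1, - e) \<in> Units D"
      using unit by (simp add: Units_dorroh_one_iff)
    show "(0, a) \<otimes>\<^bsub>D\<^esub> (1, - e) \<in> rqnil D"
      using nil by (simp add: dorroh_rqnil_zero_iff)
  qed
qed

end

lemma gquasipolar_ring_iff_dorroh:
  assumes "compat_bimodule l r"
  shows "gquasipolar_ring TYPE('a::ring) \<longleftrightarrow> (\<forall>a::'a. rquasipolar (dorroh l r) (0, a))"
proof -
  interpret dorroh_extension l r
    by (rule dorroh_extension.intro[OF assms])
  have "gquasipolar_ring TYPE('a) \<longleftrightarrow> (\<forall>a::'a. gquasipolar_elem (- a))"
    unfolding gquasipolar_ring_def by (metis minus_minus)
  then show ?thesis
    by (simp add: rquasipolar_dorroh_zero_iff)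
qed

theorem proposition3p1:
  shows "(gquasipolar_ring TYPE('a::ring) \<longleftrightarrow> (\<forall>a::'a. rquasipolar EZ (0, a)))
    \<and> ((\<forall>a::'a. rquasipolar EZ (0, a)) \<longleftrightarrow>
         (\<exists>(l :: int \<Rightarrow> 'a \<Rightarrow> 'a) r. compat_bimodule l r \<and> (\<forall>a. rquasipolar (dorroh l r) (0, a))))
    \<and> (\<forall>(l :: 's::ring_1 \<Rightarrow> 'a \<Rightarrow> 'a) r.
         compat_bimodule l r \<and> (\<forall>a. rquasipolar (dorroh l r) (0, a))
         \<longrightarrow> gquasipolar_ring TYPE('a))"
proof -
  have EZ_iff: "gquasipolar_ring TYPE('a) \<longleftrightarrow> (\<forall>a::'a. rquasipolar EZ (0, a))"
    by (rule gquasipolar_ring_iff_dorroh[OF compat_bimodule_zact])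
  moreover have "(\<forall>a::'a. rquasipolar EZ (0, a)) \<longleftrightarrow>
      (\<exists>(l :: int \<Rightarrow> 'a \<Rightarrow> 'a) r. compat_bimodule l r \<and> (\<forall>a. rquasipolar (dorroh l r) (0, a)))"
    using EZ_iff compat_bimodule_zact gquasipolar_ring_iff_dorroh by blast
  moreover have "gquasipolar_ring TYPE('a)"
    if "compat_bimodule (l :: 's::ring_1 \<Rightarrow> 'a \<Rightarrow> 'a) r" and "\<forall>a. rquasipolar (dorroh l r) (0, a)" for l r
    using that gquasipolar_ring_iff_dorroh by blast
  ultimately show ?thesis
    by blast
qed

end
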